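(* Assume that all entries of $b\in\mathbb{R}^m$ are nonzero. Then for a generic $\mathcal{A}$, i.e. for all $(A_1,\dots,A_m)\in(\mathbb{S}^n)^m$ outside a Lebesgue measure zero set, every feasible point $Y\in\mathbb{R}^{n\times p}$ of (BM) satisfies the linear independence constraint qualification: the gradients $\{2A_iY : i\in I(Y)\}$ of the active constraints are linearly independent in $\mathbb{R}^{n\times p}$.
   Context: Let $\mathbb{S}^n$ be the space of real symmetric $n\times n$ matrices and $\mathbb{S}^n_+$ the cone of positive semidefinite ones, with $A\bullet B=\operatorname{trace}(A^TB)$. Let $m=m_1+m_2$, $A_1,\dots,A_m\in\mathbb{S}^n$, $b\in\mathbb{R}^m$, $\mathscr{X}=\{X\in\mathbb{S}^n_+ : A_i\bullet X=b_i \ (i\le m_1),\ A_i\bullet X\ge b_i\ (m_1<i\le m)\}$. A point $Y\in\mathbb{R}^{n\times p}$ is feasible for (BM) if $YY^T\in\mathscr{X}$; its active set is $I(Y)=\{i: A_i\bullet YY^T=b_i\}$. The $i$-th constraint function is $h_i(Y)=A_i\bullet YY^T-b_i$, with gradient $2A_iY$. *)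

theory Defs
  imports "HOL-Analysis.Analysis"
begin

text \<open>Matrices are represented as functions nat \<Rightarrow> nat \<Rightarrow> real, with explicit
  dimension bounds; entries outside the bounds are ignored by every notion below.
  Constraints are indexed 0-based: i < m1 equality, m1 \<le> i < m1 + m2 inequality.\<close>

text \<open>Coordinates of (S^n)^m: the upper-triangular entries (k,i,j), i \<le> j, of each A_k.\<close>
definition coord_index :: "nat \<Rightarrow> nat \<Rightarrow> (nat \<times> nat \<times> nat) set" where
  "coord_index n m = {(k, i, j). k < m \<and> i \<le> j \<and> j < n}"

definition sym_lebesgue :: "nat \<Rightarrow> nat \<Rightarrow> ((nat \<times> nat \<times> nat) \<Rightarrow> real) measure" where
  "sym_lebesgue n m = PiM (coord_index n m) (\<lambda>_. lborel)"

definition sym_mats_of :: "((nat \<times> nat \<times> nat) \<Rightarrow> real) \<Rightarrow> nat \<Rightarrow> nat \<Rightarrow> nat \<Rightarrow> real" where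
  "sym_mats_of c k i j = c (k, min i j, max i j)"

definition frob_inner :: "nat \<Rightarrow> (nat \<Rightarrow> nat \<Rightarrow> real) \<Rightarrow> (nat \<Rightarrow> nat \<Rightarrow> real) \<Rightarrow> real" where
  "frob_inner n A X = (\<Sum>i<n. \<Sum>j<n. A i j * X i j)"

definition gram :: "nat \<Rightarrow> (nat \<Rightarrow> nat \<Rightarrow> real) \<Rightarrow> nat \<Rightarrow> nat \<Rightarrow> real" where
  "gram p Y i j = (\<Sum>l<p. Y i l * Y j l)"

definition is_sym :: "nat \<Rightarrow> (nat \<Rightarrow> nat \<Rightarrow> real) \<Rightarrow> bool" where
  "is_sym n X \<longleftrightarrow> (\<forall>i<n. \<forall>j<n. X i j = X j i)"

definition psd :: "nat \<Rightarrow> (nat \<Rightarrow> nat \<Rightarrow> real) \<Rightarrow> bool" where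
  "psd n X \<longleftrightarrow> is_sym n X \<and> (\<forall>v :: nat \<Rightarrow> real. 0 \<le> (\<Sum>i<n. \<Sum>j<n. v i * X i j * v j))"

definition feasible_set ::
  "nat \<Rightarrow> nat \<Rightarrow> nat \<Rightarrow> (nat \<Rightarrow> nat \<Rightarrow> nat \<Rightarrow> real) \<Rightarrow> (nat \<Rightarrow> real) \<Rightarrow> (nat \<Rightarrow> nat \<Rightarrow> real) set" where
  "feasible_set n m1 m2 A b =
     {X. psd n X \<and> (\<forall>i<m1. frob_inner n (A i) X = b i)
         \<and> (\<forall>i. m1 \<le> i \<and> i < m1 + m2 \<longrightarrow> frob_inner n (A i) X \<ge> b i)}"

definition BM_feasible ::
  "nat \<Rightarrow> nat \<Rightarrow> nat \<Rightarrow> nat \<Rightarrow> (nat \<Rightarrow> nat \<Rightarrow> nat \<Rightarrow> real) \<Rightarrow> (nat \<Rightarrow> real) \<Rightarrow> (nat \<Rightarrow> nat \<Rightarrow> real) \<Rightarrow> bool" where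
  "BM_feasible n p m1 m2 A b Y \<longleftrightarrow> gram p Y \<in> feasible_set n m1 m2 A b"

definition active_set ::
  "nat \<Rightarrow> nat \<Rightarrow> nat \<Rightarrow> (nat \<Rightarrow> nat \<Rightarrow> nat \<Rightarrow> real) \<Rightarrow> (nat \<Rightarrow> real) \<Rightarrow> (nat \<Rightarrow> nat \<Rightarrow> real) \<Rightarrow> nat set" where
  "active_set n p m A b Y = {i. i < m \<and> frob_inner n (A i) (gram p Y) = b i}"

definition constr_grad ::
  "nat \<Rightarrow> (nat \<Rightarrow> nat \<Rightarrow> nat \<Rightarrow> real) \<Rightarrow> nat \<Rightarrow> (nat \<Rightarrow> nat \<Rightarrow> real) \<Rightarrow> nat \<Rightarrow> nat \<Rightarrow> real" where
  "constr_grad n A i Y j l = 2 * (\<Sum>k<n. A i j k * Y k l)"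

definition LICQ ::
  "nat \<Rightarrow> nat \<Rightarrow> nat \<Rightarrow> (nat \<Rightarrow> nat \<Rightarrow> nat \<Rightarrow> real) \<Rightarrow> (nat \<Rightarrow> real) \<Rightarrow> (nat \<Rightarrow> nat \<Rightarrow> real) \<Rightarrow> bool" where
  "LICQ n p m A b Y \<longleftrightarrow>
     (\<forall>\<mu> :: nat \<Rightarrow> real.
        (\<forall>j<n. \<forall>l<p. (\<Sum>i\<in>active_set n p m A b Y. \<mu> i * constr_grad n A i Y j l) = 0)
        \<longrightarrow> (\<forall>i\<in>active_set n p m A b Y. \<mu> i = 0))"

end

(*
  If LICQ fails at Y, there are multipliers \<mu>, normalised to \<mu>_i0 = 1 on their support
  I \<subseteq> I(Y), with (\<Sum> \<mu>_i A_i) Y = 0. Pairing with Y gives \<Sum> \<mu>_i b_i = 0, so b \<noteq> 0 forces a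
  second index i1 \<in> I, and X = Y Y^T has a nonzero diagonal entry X_aa. Writing the rows of Y
  through a basis J of them, such degenerate tuples (A_1, ..., A_m) lie in the image of a
  rational map defined on a space with one coordinate fewer than (S^n)^m: the active
  constraints determine A_i(a,a) for i \<in> I - {i0}, stationarity determines the entries of
  A_i0 in the rows J, and \<Sum> \<mu>_i b_i = 0 determines \<mu>_i1. Counting monomials, the image of a
  rational map in fewer variables satisfies a nontrivial polynomial equation, and by Fubini the
  zero set of a nonzero polynomial is null. There are finitely many choices of (I, J, i0, i1, a).
*)

theory Submission
  imports Defs
begin

section \<open>Polynomial and rational functions of finitely many real variables\<close>

lemma exists_nontrivial_left_kernel:
  fixes L :: "'u \<Rightarrow> 'v \<Rightarrow> real"
  assumes "finite V" "finite U" "card V < card U"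
  shows "\<exists>c. (\<exists>u\<in>U. c u \<noteq> 0) \<and> (\<forall>v\<in>V. (\<Sum>u\<in>U. c u * L u v) = 0)"
  using assms
proof (induction V arbitrary: U L rule: finite_induct)
  case empty
  then obtain u where "u \<in> U" by fastforce
  then show ?case by (intro exI[of _ "\<lambda>_. 1"]) auto
next
  case (insert v V)
  show ?case
  proof (cases "\<forall>u\<in>U. L u v = 0")
    case True
    then show ?thesis using insert.IH[of U L] insert.prems insert.hyps by auto
  next
    case False
    then obtain u0 where u0: "u0 \<in> U" "L u0 v \<noteq> 0" by blast
    \<comment> \<open>Gaussian elimination: subtract multiples of row u0 to clear column v.\<close>
    define L' where "L' u w = L u w - L u v / L u0 v * L u0 w" for u w
    have "card V < card (U - {u0})" using insert u0 by simp
    then obtain c' where c': "\<exists>u\<in>U - {u0}. c' u \<noteq> 0"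
      "\<forall>w\<in>V. (\<Sum>u\<in>U - {u0}. c' u * L' u w) = 0"
      using insert.IH[of "U - {u0}" L'] insert.prems by blast
    define c where "c u = (if u = u0 then - (\<Sum>u\<in>U - {u0}. c' u * L u v) / L u0 v else c' u)" for u
    have split: "(\<Sum>u\<in>U. c u * L u w) = c u0 * L u0 w + (\<Sum>u\<in>U - {u0}. c' u * L u w)" for w
      using u0 insert.prems by (simp add: sum.remove c_def)
    have "(\<Sum>u\<in>U. c u * L u w) = 0" if "w \<in> insert v V" for w
    proof (cases "w = v")
      case True
      then show ?thesis unfolding split using u0 by (simp add: c_def)
    next
      case False
      have "(\<Sum>u\<in>U - {u0}. c' u * L' u w)
          = (\<Sum>u\<in>U - {u0}. c' u * L u w) - (\<Sum>u\<in>U - {u0}. c' u * L u v) / L u0 v * L u0 w"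
        unfolding L'_def
        by (simp add: algebra_simps sum_subtractf sum_distrib_left sum_distrib_right sum_divide_distrib)
      then show ?thesis unfolding split using c'(2) False that u0 by (simp add: c_def algebra_simps)
    qed
    moreover have "\<exists>u\<in>U. c u \<noteq> 0" using c'(1) unfolding c_def by auto
    ultimately show ?thesis by blast
  qed
qed

definition monom_fun :: "'k set \<Rightarrow> ('k \<Rightarrow> nat) \<Rightarrow> ('k \<Rightarrow> real) \<Rightarrow> real" where
  "monom_fun K \<alpha> x = (\<Prod>k\<in>K. x k ^ \<alpha> k)"

definition exponents_le :: "'k set \<Rightarrow> nat \<Rightarrow> ('k \<Rightarrow> nat) set" where
  "exponents_le K e = PiE K (\<lambda>_. {..e})"

text \<open>Degree at most e in each variable separately.\<close>

definition poly_fun_deg_le :: "'k set \<Rightarrow> nat \<Rightarrow> (('k \<Rightarrow> real) \<Rightarrow> real) \<Rightarrow> bool" where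
  "poly_fun_deg_le K e f \<longleftrightarrow>
     (\<exists>c. \<forall>x. f x = (\<Sum>\<alpha>\<in>exponents_le K e. c \<alpha> * monom_fun K \<alpha> x))"

definition poly_fun :: "'k set \<Rightarrow> (('k \<Rightarrow> real) \<Rightarrow> real) \<Rightarrow> bool" where
  "poly_fun K f \<longleftrightarrow> (\<exists>e. poly_fun_deg_le K e f)"

lemma finite_exponents_le [simp]: "finite K \<Longrightarrow> finite (exponents_le K e)"
  unfolding exponents_le_def by (simp add: finite_PiE)

lemma card_exponents_le: "finite K \<Longrightarrow> card (exponents_le K e) = (e + 1) ^ card K"
  unfolding exponents_le_def by (simp add: card_PiE)

lemma exponents_le_mono: "e \<le> e' \<Longrightarrow> exponents_le K e \<subseteq> exponents_le K e'"
  unfolding exponents_le_def by (auto simp: PiE_iff intro: order_trans)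

lemma monom_fun_add: "monom_fun K (\<lambda>k\<in>K. \<alpha> k + \<beta> k) x = monom_fun K \<alpha> x * monom_fun K \<beta> x"
  unfolding monom_fun_def by (simp add: prod.distrib[symmetric] power_add)

lemma poly_fun_deg_le_mono:
  assumes "finite K" "e \<le> e'" "poly_fun_deg_le K e f"
  shows "poly_fun_deg_le K e' f"
proof -
  obtain c where c: "\<forall>x. f x = (\<Sum>\<alpha>\<in>exponents_le K e. c \<alpha> * monom_fun K \<alpha> x)"
    using assms(3) unfolding poly_fun_deg_le_def by blast
  define c' where "c' \<alpha> = (if \<alpha> \<in> exponents_le K e then c \<alpha> else 0)" for \<alpha>
  have "(\<Sum>\<alpha>\<in>exponents_le K e'. c' \<alpha> * monom_fun K \<alpha> x) = f x" for x
    using exponents_le_mono[OF assms(2)] assms(1) c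
    by (subst sum.mono_neutral_right[where S = "exponents_le K e"]) (auto simp: c'_def)
  then show ?thesis unfolding poly_fun_deg_le_def by metis
qed

lemma poly_fun_deg_le_monom:
  assumes "finite K" "\<alpha>0 \<in> exponents_le K e"
  shows "poly_fun_deg_le K e (\<lambda>x. a * monom_fun K \<alpha>0 x)"
proof -
  have "(\<Sum>\<alpha>\<in>exponents_le K e. (if \<alpha> = \<alpha>0 then a else 0) * monom_fun K \<alpha> x)
      = (\<Sum>\<alpha>\<in>exponents_le K e. if \<alpha> = \<alpha>0 then a * monom_fun K \<alpha> x else 0)" for x
    by (rule sum.cong) auto
  also have "\<dots> x = a * monom_fun K \<alpha>0 x" for x
    using assms by (simp add: sum.delta')
  finally show ?thesis unfolding poly_fun_deg_le_def by (intro exI[of _ "\<lambda>\<alpha>. if \<alpha> = \<alpha>0 then a else 0"]) simp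
qed

lemma poly_fun_deg_le_const: "finite K \<Longrightarrow> poly_fun_deg_le K e (\<lambda>x. a)"
  using poly_fun_deg_le_monom[of K "\<lambda>k\<in>K. 0" e a]
  by (simp add: exponents_le_def monom_fun_def)

lemma poly_fun_deg_le_var:
  assumes "finite K" "k0 \<in> K"
  shows "poly_fun_deg_le K 1 (\<lambda>x. x k0)"
proof -
  define \<alpha>0 where "\<alpha>0 = (\<lambda>k\<in>K. if k = k0 then 1 else 0::nat)"
  have "monom_fun K \<alpha>0 x = (\<Prod>k\<in>K. if k = k0 then x k else 1)" for x
    unfolding monom_fun_def \<alpha>0_def by (rule prod.cong) auto
  then have "monom_fun K \<alpha>0 x = x k0" for x
    using assms by (simp add: prod.delta)
  moreover have "\<alpha>0 \<in> exponents_le K 1" unfolding exponents_le_def \<alpha>0_def by auto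
  ultimately show ?thesis using poly_fun_deg_le_monom[OF assms(1), of \<alpha>0 1 1] by simp
qed

lemma poly_fun_deg_le_add:
  assumes "poly_fun_deg_le K e f" "poly_fun_deg_le K e g"
  shows "poly_fun_deg_le K e (\<lambda>x. f x + g x)"
proof -
  obtain cf cg where "\<forall>x. f x = (\<Sum>\<alpha>\<in>exponents_le K e. cf \<alpha> * monom_fun K \<alpha> x)"
    "\<forall>x. g x = (\<Sum>\<alpha>\<in>exponents_le K e. cg \<alpha> * monom_fun K \<alpha> x)"
    using assms unfolding poly_fun_deg_le_def by blast
  then have "\<forall>x. f x + g x = (\<Sum>\<alpha>\<in>exponents_le K e. (cf \<alpha> + cg \<alpha>) * monom_fun K \<alpha> x)"
    by (simp add: sum.distrib distrib_right)
  then show ?thesis unfolding poly_fun_deg_le_def by (rule exI[of _ "\<lambda>\<alpha>. cf \<alpha> + cg \<alpha>"])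
qed

lemma poly_fun_deg_le_mult:
  assumes K: "finite K" and "poly_fun_deg_le K e1 f" "poly_fun_deg_le K e2 g"
  shows "poly_fun_deg_le K (e1 + e2) (\<lambda>x. f x * g x)"
proof -
  obtain cf cg where cf: "\<forall>x. f x = (\<Sum>\<alpha>\<in>exponents_le K e1. cf \<alpha> * monom_fun K \<alpha> x)"
    and cg: "\<forall>x. g x = (\<Sum>\<alpha>\<in>exponents_le K e2. cg \<alpha> * monom_fun K \<alpha> x)"
    using assms unfolding poly_fun_deg_le_def by blast
  define S where "S = exponents_le K e1 \<times> exponents_le K e2"
  define s where "s z = (\<lambda>k\<in>K. fst z k + snd z k)" for z :: "('a \<Rightarrow> nat) \<times> ('a \<Rightarrow> nat)"
  have sS: "s ` S \<subseteq> exponents_le K (e1 + e2)"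
    unfolding S_def s_def exponents_le_def by (auto simp: PiE_iff add_mono)
  define c where "c \<gamma> = (\<Sum>z\<in>{z\<in>S. s z = \<gamma>}. cf (fst z) * cg (snd z))" for \<gamma>
  have "f x * g x = (\<Sum>\<gamma>\<in>exponents_le K (e1 + e2). c \<gamma> * monom_fun K \<gamma> x)" for x
  proof -
    have "f x * g x = (\<Sum>\<alpha>\<in>exponents_le K e1. \<Sum>\<beta>\<in>exponents_le K e2.
                         (cf \<alpha> * monom_fun K \<alpha> x) * (cg \<beta> * monom_fun K \<beta> x))"
      using cf cg by (simp add: sum_product)
    also have "\<dots> = (\<Sum>z\<in>S. cf (fst z) * cg (snd z) * monom_fun K (s z) x)"
      unfolding S_def s_def sum.cartesian_product
      by (intro sum.cong refl) (auto simp: monom_fun_add mult_ac)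
    also have "\<dots> = (\<Sum>\<gamma>\<in>exponents_le K (e1 + e2).
                      \<Sum>z\<in>{z\<in>S. s z = \<gamma>}. cf (fst z) * cg (snd z) * monom_fun K (s z) x)"
      using K sS by (intro sum.group[symmetric]) (auto simp: S_def)
    also have "\<dots> = (\<Sum>\<gamma>\<in>exponents_le K (e1 + e2). c \<gamma> * monom_fun K \<gamma> x)"
      unfolding c_def sum_distrib_right by (intro sum.cong refl) simp
    finally show ?thesis .
  qed
  then show ?thesis unfolding poly_fun_deg_le_def by blast
qed

lemma poly_fun_deg_le_prod:
  assumes "finite K" "finite S" "\<And>i. i \<in> S \<Longrightarrow> poly_fun_deg_le K (d i) (f i)"
  shows "poly_fun_deg_le K (\<Sum>i\<in>S. d i) (\<lambda>x. \<Prod>i\<in>S. f i x)"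
  using assms(2,3)
proof (induction S rule: finite_induct)
  case (insert i S)
  then have "poly_fun_deg_le K (d i + (\<Sum>i\<in>S. d i)) (\<lambda>x. f i x * (\<Prod>i\<in>S. f i x))"
    by (intro poly_fun_deg_le_mult[OF assms(1)]) auto
  then show ?case using insert.hyps by simp
qed (simp add: poly_fun_deg_le_const[OF assms(1)])

lemma poly_fun_deg_le_power:
  assumes "finite K" "poly_fun_deg_le K e f"
  shows "poly_fun_deg_le K (e * j) (\<lambda>x. f x ^ j)"
  using poly_fun_deg_le_prod[OF assms(1) finite_lessThan[of j], of "\<lambda>_. e" "\<lambda>_. f"] assms(2)
  by (simp add: mult.commute)

lemma poly_fun_common_degree:
  assumes "finite K" "finite T" "\<And>t. t \<in> T \<Longrightarrow> poly_fun K (p t)"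
  shows "\<exists>e. \<forall>t\<in>T. poly_fun_deg_le K e (p t)"
  using assms(2,3)
proof (induction T rule: finite_induct)
  case (insert t T)
  obtain e where "\<forall>t\<in>T. poly_fun_deg_le K e (p t)" using insert by auto
  moreover obtain e' where "poly_fun_deg_le K e' (p t)"
    using insert.prems[of t] unfolding poly_fun_def by blast
  ultimately have "\<forall>t\<in>insert t T. poly_fun_deg_le K (max e e') (p t)"
    by (auto intro: poly_fun_deg_le_mono[OF assms(1), rotated])
  then show ?case by blast
qed simp

lemma poly_fun_const: "finite K \<Longrightarrow> poly_fun K (\<lambda>x. a)"
  unfolding poly_fun_def by (rule exI, rule poly_fun_deg_le_const)

lemma poly_fun_var: "finite K \<Longrightarrow> k \<in> K \<Longrightarrow> poly_fun K (\<lambda>x. x k)"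
  unfolding poly_fun_def by (rule exI, rule poly_fun_deg_le_var)

lemma poly_fun_add:
  assumes "finite K" "poly_fun K f" "poly_fun K g"
  shows "poly_fun K (\<lambda>x. f x + g x)"
proof -
  obtain e1 e2 where f: "poly_fun_deg_le K e1 f" and g: "poly_fun_deg_le K e2 g"
    using assms(2,3) unfolding poly_fun_def by blast
  have "poly_fun_deg_le K (max e1 e2) (\<lambda>x. f x + g x)"
    using poly_fun_deg_le_mono[OF assms(1) _ f] poly_fun_deg_le_mono[OF assms(1) _ g]
    by (intro poly_fun_deg_le_add) simp_all
  then show ?thesis unfolding poly_fun_def ..
qed

lemma poly_fun_mult:
  assumes "finite K" "poly_fun K f" "poly_fun K g"
  shows "poly_fun K (\<lambda>x. f x * g x)"
proof -
  obtain e1 e2 where "poly_fun_deg_le K e1 f" "poly_fun_deg_le K e2 g"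
    using assms(2,3) unfolding poly_fun_def by blast
  then have "poly_fun_deg_le K (e1 + e2) (\<lambda>x. f x * g x)" by (rule poly_fun_deg_le_mult[OF assms(1)])
  then show ?thesis unfolding poly_fun_def ..
qed

lemma poly_fun_diff:
  assumes "finite K" "poly_fun K f" "poly_fun K g"
  shows "poly_fun K (\<lambda>x. f x - g x)"
  using poly_fun_add[OF assms(1,2) poly_fun_mult[OF assms(1) poly_fun_const[OF assms(1)] assms(3)],
      of "-1"]
  by simp

lemma poly_fun_sum:
  assumes "finite K" "finite S" "\<And>i. i \<in> S \<Longrightarrow> poly_fun K (f i)"
  shows "poly_fun K (\<lambda>x. \<Sum>i\<in>S. f i x)"
  using assms(2,3)
proof (induction S rule: finite_induct)
  case (insert i S)
  then have "poly_fun K (\<lambda>x. f i x + (\<Sum>i\<in>S. f i x))"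
    by (intro poly_fun_add[OF assms(1)]) auto
  then show ?case using insert.hyps by simp
qed (simp add: poly_fun_const[OF assms(1)])

lemma poly_fun_if:
  "(P \<Longrightarrow> poly_fun K f) \<Longrightarrow> (\<not> P \<Longrightarrow> poly_fun K g) \<Longrightarrow> poly_fun K (\<lambda>x. if P then f x else g x)"
  by (cases P) auto

definition rat_fun_over :: "'k set \<Rightarrow> (('k \<Rightarrow> real) \<Rightarrow> real) \<Rightarrow> (('k \<Rightarrow> real) \<Rightarrow> real) \<Rightarrow> bool" where
  "rat_fun_over K q f \<longleftrightarrow> (\<exists>p. poly_fun K p \<and> (\<forall>x. q x \<noteq> 0 \<longrightarrow> f x = p x / q x))"

context
  fixes K :: "'k set" and q :: "('k \<Rightarrow> real) \<Rightarrow> real"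
  assumes K: "finite K" and q: "poly_fun K q"
begin

lemma rat_fun_over_poly: "poly_fun K f \<Longrightarrow> rat_fun_over K q f"
  unfolding rat_fun_over_def
  by (intro exI[of _ "\<lambda>x. f x * q x"] conjI poly_fun_mult[OF K _ q]) auto

lemma rat_fun_over_divide: "poly_fun K p \<Longrightarrow> rat_fun_over K q (\<lambda>x. p x / q x)"
  unfolding rat_fun_over_def by blast

lemma rat_fun_over_add:
  assumes "rat_fun_over K q f" "rat_fun_over K q g"
  shows "rat_fun_over K q (\<lambda>x. f x + g x)"
proof -
  obtain pf pg where "poly_fun K pf" "\<forall>x. q x \<noteq> 0 \<longrightarrow> f x = pf x / q x"
    "poly_fun K pg" "\<forall>x. q x \<noteq> 0 \<longrightarrow> g x = pg x / q x"
    using assms unfolding rat_fun_over_def by blast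
  then show ?thesis unfolding rat_fun_over_def
    by (intro exI[of _ "\<lambda>x. pf x + pg x"] conjI poly_fun_add[OF K]) (auto simp: add_divide_distrib)
qed

lemma rat_fun_over_poly_mult:
  assumes "poly_fun K g" "rat_fun_over K q f"
  shows "rat_fun_over K q (\<lambda>x. g x * f x)"
proof -
  obtain pf where "poly_fun K pf" "\<forall>x. q x \<noteq> 0 \<longrightarrow> f x = pf x / q x"
    using assms unfolding rat_fun_over_def by blast
  then show ?thesis unfolding rat_fun_over_def using assms(1)
    by (intro exI[of _ "\<lambda>x. g x * pf x"] conjI poly_fun_mult[OF K]) auto
qed

lemma rat_fun_over_diff:
  assumes "rat_fun_over K q f" "rat_fun_over K q g"
  shows "rat_fun_over K q (\<lambda>x. f x - g x)"
  using rat_fun_over_add[OF assms(1) rat_fun_over_poly_mult[OF poly_fun_const[OF K, of "-1"] assms(2)]]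
  by simp

lemma rat_fun_over_sum:
  assumes "finite S" "\<And>i. i \<in> S \<Longrightarrow> rat_fun_over K q (f i)"
  shows "rat_fun_over K q (\<lambda>x. \<Sum>i\<in>S. f i x)"
  using assms
proof (induction S rule: finite_induct)
  case empty
  then show ?case using rat_fun_over_poly[OF poly_fun_const[OF K, of 0]] by simp
next
  case (insert i S)
  then have "rat_fun_over K q (\<lambda>x. f i x + (\<Sum>i\<in>S. f i x))"
    by (intro rat_fun_over_add) auto
  then show ?case using insert.hyps by simp
qed

end

lemma rat_fun_over_if:
  "(P \<Longrightarrow> rat_fun_over K q f) \<Longrightarrow> (\<not> P \<Longrightarrow> rat_fun_over K q g)
    \<Longrightarrow> rat_fun_over K q (\<lambda>x. if P then f x else g x)"
  by (cases P) auto

lemma poly_funs_linearly_dependent: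
  assumes "finite K" "finite A" "card (exponents_le K e) < card A"
    and "\<And>\<alpha>. \<alpha> \<in> A \<Longrightarrow> poly_fun_deg_le K e (g \<alpha>)"
  shows "\<exists>c. (\<exists>\<alpha>\<in>A. c \<alpha> \<noteq> 0) \<and> (\<forall>x. (\<Sum>\<alpha>\<in>A. c \<alpha> * g \<alpha> x) = 0)"
proof -
  have "\<forall>\<alpha>\<in>A. \<exists>L. \<forall>x. g \<alpha> x = (\<Sum>\<beta>\<in>exponents_le K e. L \<beta> * monom_fun K \<beta> x)"
    using assms(4) unfolding poly_fun_deg_le_def by blast
  then obtain L where L: "\<And>\<alpha> x. \<alpha> \<in> A \<Longrightarrow> g \<alpha> x = (\<Sum>\<beta>\<in>exponents_le K e. L \<alpha> \<beta> * monom_fun K \<beta> x)"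
    by metis
  obtain c where c: "\<exists>\<alpha>\<in>A. c \<alpha> \<noteq> 0" "\<forall>\<beta>\<in>exponents_le K e. (\<Sum>\<alpha>\<in>A. c \<alpha> * L \<alpha> \<beta>) = 0"
    using exists_nontrivial_left_kernel[OF finite_exponents_le[OF assms(1)] assms(2,3)] by blast
  have "(\<Sum>\<alpha>\<in>A. c \<alpha> * g \<alpha> x) = (\<Sum>\<beta>\<in>exponents_le K e. (\<Sum>\<alpha>\<in>A. c \<alpha> * L \<alpha> \<beta>) * monom_fun K \<beta> x)" for x
    by (simp add: L sum_distrib_left sum_distrib_right mult.assoc cong: sum.cong) (rule sum.swap)
  then show ?thesis using c by auto
qed

lemma monomial_count_ineq:
  fixes s e k :: nat
  assumes "k < s" "1 \<le> e"
  shows "((s * e) ^ k * s * e + 1) ^ k < ((s * e) ^ k + 1) ^ s"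
proof -
  define D where "D = (s * e) ^ k"
  have "(D * s * e + 1) ^ k \<le> ((D + 1) * (s * e)) ^ k"
    using assms by (intro power_mono) (auto simp: algebra_simps)
  also have "\<dots> = (D + 1) ^ k * D" by (simp only: power_mult_distrib D_def)
  also have "\<dots> < (D + 1) ^ Suc k" by simp
  also have "\<dots> \<le> (D + 1) ^ s" using assms by (intro power_increasing) auto
  finally show ?thesis unfolding D_def .
qed

lemma monom_fun_divide:
  fixes p :: "'t \<Rightarrow> real"
  shows "monom_fun T \<alpha> (\<lambda>t. p t / r) = monom_fun T \<alpha> p / r ^ (\<Sum>t\<in>T. \<alpha> t)"
  unfolding monom_fun_def by (simp add: power_divide prod_dividef power_sum)

lemma poly_fun_deg_le_homogenized:
  assumes K: "finite K" and "finite T" "\<And>t. t \<in> T \<Longrightarrow> poly_fun_deg_le K e (p t)"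
    and "poly_fun_deg_le K e q" "(\<Sum>t\<in>T. \<alpha> t) \<le> N"
  shows "poly_fun_deg_le K (e * N) (\<lambda>x. monom_fun T \<alpha> (\<lambda>t. p t x) * q x ^ (N - (\<Sum>t\<in>T. \<alpha> t)))"
proof -
  have "poly_fun_deg_le K ((\<Sum>t\<in>T. e * \<alpha> t) + e * (N - (\<Sum>t\<in>T. \<alpha> t)))
          (\<lambda>x. monom_fun T \<alpha> (\<lambda>t. p t x) * q x ^ (N - (\<Sum>t\<in>T. \<alpha> t)))"
    unfolding monom_fun_def using assms
    by (intro poly_fun_deg_le_mult[OF K] poly_fun_deg_le_prod[OF K] poly_fun_deg_le_power[OF K]) auto
  moreover have "(\<Sum>t\<in>T. e * \<alpha> t) + e * (N - (\<Sum>t\<in>T. \<alpha> t)) = e * N"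
    using assms(5) by (simp add: sum_distrib_left[symmetric] add_mult_distrib2[symmetric])
  ultimately show ?thesis by simp
qed

text \<open>Clearing denominators turns a polynomial relation of degree D in the s = card T quotients
  into a linear relation among polynomials of degree e D s in the k = card K variables; the
  monomial count shows there are more unknown coefficients than equations.\<close>

lemma rat_funs_algebraically_dependent:
  fixes p :: "'t \<Rightarrow> ('k \<Rightarrow> real) \<Rightarrow> real" and q :: "('k \<Rightarrow> real) \<Rightarrow> real"
  assumes K: "finite K" and T: "finite T" and card: "card K < card T"
    and p: "\<And>t. t \<in> T \<Longrightarrow> poly_fun K (p t)" and q: "poly_fun K q"
  shows "\<exists>D c. (\<exists>\<alpha>\<in>exponents_le T D. c \<alpha> \<noteq> 0) \<and>
     (\<forall>x. q x \<noteq> 0 \<longrightarrow> (\<Sum>\<alpha>\<in>exponents_le T D. c \<alpha> * monom_fun T \<alpha> (\<lambda>t. p t x / q x)) = 0)"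
proof -
  obtain e1 e2 where e1: "\<forall>t\<in>T. poly_fun_deg_le K e1 (p t)" and e2: "poly_fun_deg_le K e2 q"
    using poly_fun_common_degree[OF K T, of p] p q unfolding poly_fun_def by blast
  define e where "e = Suc (max e1 e2)"
  have pe: "poly_fun_deg_le K e (p t)" if "t \<in> T" for t
    using poly_fun_deg_le_mono[OF K _ e1[rule_format, OF that]] by (simp add: e_def)
  have qe: "poly_fun_deg_le K e q"
    using poly_fun_deg_le_mono[OF K _ e2] by (simp add: e_def)
  define D where "D = (card T * e) ^ card K"
  define N where "N = D * card T"
  define g where "g \<alpha> x = monom_fun T \<alpha> (\<lambda>t. p t x) * q x ^ (N - (\<Sum>t\<in>T. \<alpha> t))" for \<alpha> x
  have sum_le: "(\<Sum>t\<in>T. \<alpha> t) \<le> N" if "\<alpha> \<in> exponents_le T D" for \<alpha>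
    using sum_bounded_above[of T \<alpha> D] that by (auto simp: exponents_le_def PiE_iff N_def mult.commute)
  have deg: "poly_fun_deg_le K (e * N) (g \<alpha>)" if "\<alpha> \<in> exponents_le T D" for \<alpha>
    unfolding g_def using pe qe sum_le[OF that] by (intro poly_fun_deg_le_homogenized[OF K T]) auto
  have "card (exponents_le K (e * N)) < card (exponents_le T D)"
    using monomial_count_ineq[OF card, of e] by (simp add: card_exponents_le K T D_def N_def e_def ac_simps)
  then obtain c where c: "\<exists>\<alpha>\<in>exponents_le T D. c \<alpha> \<noteq> 0"
    and rel: "\<And>x. (\<Sum>\<alpha>\<in>exponents_le T D. c \<alpha> * g \<alpha> x) = 0"
    using poly_funs_linearly_dependent[of K "exponents_le T D" "e * N" g, OF K _ _ deg] T by auto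
  have "(\<Sum>\<alpha>\<in>exponents_le T D. c \<alpha> * monom_fun T \<alpha> (\<lambda>t. p t x / q x)) = 0" if "q x \<noteq> 0" for x
  proof -
    have "monom_fun T \<alpha> (\<lambda>t. p t x / q x) = g \<alpha> x / q x ^ N" if "\<alpha> \<in> exponents_le T D" for \<alpha>
      using \<open>q x \<noteq> 0\<close> sum_le[OF that]
      by (simp add: monom_fun_divide g_def power_diff)
    then have "(\<Sum>\<alpha>\<in>exponents_le T D. c \<alpha> * monom_fun T \<alpha> (\<lambda>t. p t x / q x))
        = (\<Sum>\<alpha>\<in>exponents_le T D. c \<alpha> * g \<alpha> x) / q x ^ N"
      by (simp add: sum_divide_distrib)
    then show ?thesis using rel by simp
  qed
  then show ?thesis using c by blast
qed

lemma poly_expand_in_variable: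
  assumes "finite T" "t \<notin> T"
  shows "(\<Sum>\<alpha>\<in>exponents_le (insert t T) D. c \<alpha> * monom_fun (insert t T) \<alpha> z)
     = (\<Sum>k\<le>D. (\<Sum>\<beta>\<in>exponents_le T D. c (\<beta>(t := k)) * monom_fun T \<beta> z) * z t ^ k)"
proof -
  let ?upd = "\<lambda>(k, \<beta>). \<beta>(t := k)"
  have eq: "exponents_le (insert t T) D = ?upd ` ({..D} \<times> exponents_le T D)"
    unfolding exponents_le_def by (rule PiE_insert_eq)
  have inj: "inj_on ?upd ({..D} \<times> exponents_le T D)"
  proof (rule inj_onI, clarify)
    fix k1 \<beta>1 k2 \<beta>2
    assume \<beta>: "\<beta>1 \<in> exponents_le T D" "\<beta>2 \<in> exponents_le T D" and e: "\<beta>1(t := k1) = \<beta>2(t := k2)"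
    have "\<beta>1 s = \<beta>2 s" for s
    proof (cases "s = t")
      case True
      then show ?thesis using \<beta> assms(2) by (simp add: exponents_le_def PiE_def extensional_def)
    next
      case False
      then show ?thesis using fun_cong[OF e, of s] by simp
    qed
    then show "k1 = k2 \<and> \<beta>1 = \<beta>2" using fun_cong[OF e, of t] by auto
  qed
  have "(\<Prod>s\<in>T. z s ^ (\<beta>(t := k)) s) = monom_fun T \<beta> z" for \<beta> k
    unfolding monom_fun_def using assms(2) by (intro prod.cong) auto
  then have monom: "monom_fun (insert t T) (\<beta>(t := k)) z = z t ^ k * monom_fun T \<beta> z" for \<beta> k
    using assms by (simp add: monom_fun_def)
  have "(\<Sum>\<alpha>\<in>exponents_le (insert t T) D. c \<alpha> * monom_fun (insert t T) \<alpha> z)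
      = (\<Sum>(k, \<beta>)\<in>{..D} \<times> exponents_le T D. c (\<beta>(t := k)) * monom_fun T \<beta> z * z t ^ k)"
    unfolding eq by (subst sum.reindex[OF inj]) (auto simp: monom mult_ac intro!: sum.cong)
  also have "\<dots> = (\<Sum>k\<le>D. (\<Sum>\<beta>\<in>exponents_le T D. c (\<beta>(t := k)) * monom_fun T \<beta> z) * z t ^ k)"
    by (simp add: sum.cartesian_product[symmetric] sum_distrib_right)
  finally show ?thesis .
qed

lemma (in product_sigma_finite) null_sets_PiM_insert:
  assumes "finite T" "t \<notin> T" "Z \<in> sets (PiM (insert t T) M)"
    and "AE x in PiM T M. emeasure (PiM {t} M) ((\<lambda>y. merge T {t} (x, y)) -` Z \<inter> space (PiM {t} M)) = 0"
  shows "Z \<in> null_sets (PiM (insert t T) M)"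
proof -
  have "emeasure (PiM (T \<union> {t}) M) Z
      = (\<integral>\<^sup>+x. emeasure (PiM {t} M) ((\<lambda>y. merge T {t} (x, y)) -` Z \<inter> space (PiM {t} M)) \<partial>PiM T M)"
    using assms by (intro emeasure_fold_integral) auto
  also have "\<dots> = (\<integral>\<^sup>+x. 0 \<partial>PiM T M)"
    using assms(4) by (intro nn_integral_cong_AE) (auto elim!: AE_mp)
  finally show ?thesis using assms(3) by (intro null_setsI) auto
qed

lemma finite_coordinate_values_null:
  assumes "finite R"
  shows "{y \<in> space (PiM {t} (\<lambda>_. lborel)). y t \<in> R} \<in> null_sets (PiM {t} (\<lambda>_. lborel :: real measure))"
proof -
  interpret product_sigma_finite "\<lambda>_. lborel :: real measure" by standard
  have R: "R \<in> sets lborel" using assms by (auto intro: borel_closed finite_imp_closed)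
  have "{y \<in> space (PiM {t} (\<lambda>_. lborel)). y t \<in> R} = PiE {t} (\<lambda>_. R)"
    by (auto simp: space_PiM PiE_iff extensional_def)
  moreover have "emeasure (PiM {t} (\<lambda>_. lborel)) (PiE {t} (\<lambda>_. R)) = 0"
    using R finite_imp_null_set_lborel[OF assms] by (simp add: emeasure_PiM null_setsD1)
  ultimately show ?thesis using R by (auto intro: null_setsI)
qed

section \<open>Zero sets of polynomials are null\<close>

lemma borel_measurable_poly_fun_PiM [measurable]:
  "finite T \<Longrightarrow> (\<lambda>y. \<Sum>\<alpha>\<in>A. c \<alpha> * monom_fun T \<alpha> y) \<in> borel_measurable (PiM T (\<lambda>_. lborel))"
  unfolding monom_fun_def by measurable

text \<open>Fubini and induction on the variables: fixing all but the variable t, the section of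
  the zero set is the root set of a one-variable polynomial whose coefficients are polynomials
  in the remaining variables, and one of those is nonzero outside a null set.\<close>

lemma poly_zero_set_null:
  fixes T :: "'t set"
  assumes "finite T" "\<alpha>0 \<in> exponents_le T D" "c \<alpha>0 \<noteq> 0"
  shows "{y \<in> space (PiM T (\<lambda>_. lborel)). (\<Sum>\<alpha>\<in>exponents_le T D. c \<alpha> * monom_fun T \<alpha> y) = 0}
           \<in> null_sets (PiM T (\<lambda>_. lborel))"
  using assms
proof (induction T arbitrary: c \<alpha>0 rule: finite_induct)
  case empty
  then show ?case by (simp add: exponents_le_def monom_fun_def)
next
  case (insert t T)
  let ?M = "\<lambda>_::'t. lborel :: real measure"
  let ?Z = "{y \<in> space (PiM (insert t T) ?M).
              (\<Sum>\<alpha>\<in>exponents_le (insert t T) D. c \<alpha> * monom_fun (insert t T) \<alpha> y) = 0}"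
  interpret product_sigma_finite ?M by standard
  define P where "P k x = (\<Sum>\<beta>\<in>exponents_le T D. c (\<beta>(t := k)) * monom_fun T \<beta> x)" for k x
  have \<alpha>0: "restrict \<alpha>0 T \<in> exponents_le T D" "\<alpha>0 t \<le> D" "(restrict \<alpha>0 T)(t := \<alpha>0 t) = \<alpha>0"
    using insert.prems(1) insert.hyps(2) unfolding exponents_le_def
    by (auto simp: PiE_iff extensional_def fun_eq_iff)
  have "c ((restrict \<alpha>0 T)(t := \<alpha>0 t)) \<noteq> 0"
    unfolding \<alpha>0(3) by (rule insert.prems(2))
  then have "{x \<in> space (PiM T ?M). P (\<alpha>0 t) x = 0} \<in> null_sets (PiM T ?M)"
    unfolding P_def by (intro insert.IH[OF \<alpha>0(1)])
  from AE_not_in[OF this]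
  have "AE x in PiM T ?M. emeasure (PiM {t} ?M) ((\<lambda>y. merge T {t} (x, y)) -` ?Z \<inter> space (PiM {t} ?M)) = 0"
  proof (rule AE_mp, intro AE_I2 impI)
    fix x assume x: "x \<in> space (PiM T ?M)" "x \<notin> {x \<in> space (PiM T ?M). P (\<alpha>0 t) x = 0}"
    define R where "R = {r::real. (\<Sum>k\<le>D. P k x * r ^ k) = 0}"
    have R: "finite R"
      unfolding R_def using x \<alpha>0(2) by (intro polyfun_roots_finite[of "\<lambda>k. P k x" "\<alpha>0 t"]) auto
    have "P k (merge T {t} (x, y)) = P k x" for k y
      unfolding P_def monom_fun_def using insert.hyps(2)
      by (intro sum.cong refl arg_cong2[where f = "(*)"] prod.cong) (auto simp: merge_def)
    moreover have "merge T {t} (x, y) t = y t" for y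
      using insert.hyps(2) by (simp add: merge_def)
    ultimately have "(\<Sum>\<alpha>\<in>exponents_le (insert t T) D. c \<alpha> * monom_fun (insert t T) \<alpha> (merge T {t} (x, y)))
        = (\<Sum>k\<le>D. P k x * y t ^ k)" for y
      using insert.hyps by (simp add: poly_expand_in_variable P_def[symmetric])
    then have "(\<lambda>y. merge T {t} (x, y)) -` ?Z \<inter> space (PiM {t} ?M) \<subseteq> {y \<in> space (PiM {t} ?M). y t \<in> R}"
      unfolding R_def by (simp add: subset_iff)
    moreover note N = finite_coordinate_values_null[OF R, of t]
    ultimately show "emeasure (PiM {t} ?M) ((\<lambda>y. merge T {t} (x, y)) -` ?Z \<inter> space (PiM {t} ?M)) = 0"
      using emeasure_eq_0[OF null_setsD2[OF N] null_setsD1[OF N]] by blast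
  qed
  then show ?case using insert.hyps by (intro null_sets_PiM_insert) auto
qed

lemma rat_map_image_null:
  fixes F :: "('k \<Rightarrow> real) \<Rightarrow> 't \<Rightarrow> real"
  assumes K: "finite K" and T: "finite T" and card: "card K < card T" and q: "poly_fun K q"
    and F: "\<And>t. t \<in> T \<Longrightarrow> rat_fun_over K q (\<lambda>x. F x t)"
  shows "\<exists>N\<in>null_sets (PiM T (\<lambda>_. lborel)). \<forall>y\<in>space (PiM T (\<lambda>_. lborel)).
           (\<exists>x. q x \<noteq> 0 \<and> (\<forall>t\<in>T. y t = F x t)) \<longrightarrow> y \<in> N"
proof -
  have "\<forall>t\<in>T. \<exists>p. poly_fun K p \<and> (\<forall>x. q x \<noteq> 0 \<longrightarrow> F x t = p x / q x)"
    using F unfolding rat_fun_over_def by blast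
  then obtain p where p: "\<And>t. t \<in> T \<Longrightarrow> poly_fun K (p t)"
    and F_eq: "\<And>t x. t \<in> T \<Longrightarrow> q x \<noteq> 0 \<Longrightarrow> F x t = p t x / q x"
    by metis
  obtain D c where c: "\<exists>\<alpha>\<in>exponents_le T D. c \<alpha> \<noteq> 0"
    and rel: "\<forall>x. q x \<noteq> 0 \<longrightarrow> (\<Sum>\<alpha>\<in>exponents_le T D. c \<alpha> * monom_fun T \<alpha> (\<lambda>t. p t x / q x)) = 0"
    using rat_funs_algebraically_dependent[OF K T card, of p q] p q by blast
  define N where "N = {y \<in> space (PiM T (\<lambda>_. lborel)). (\<Sum>\<alpha>\<in>exponents_le T D. c \<alpha> * monom_fun T \<alpha> y) = 0}"
  have "N \<in> null_sets (PiM T (\<lambda>_. lborel))"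
    using c poly_zero_set_null[OF T] unfolding N_def by blast
  moreover have "y \<in> N" if "y \<in> space (PiM T (\<lambda>_. lborel))" "q x \<noteq> 0" "\<forall>t\<in>T. y t = F x t" for x y
  proof -
    have "monom_fun T \<alpha> y = monom_fun T \<alpha> (\<lambda>t. p t x / q x)" for \<alpha>
      unfolding monom_fun_def using that F_eq by (intro prod.cong) auto
    then show ?thesis unfolding N_def using that rel by simp
  qed
  ultimately show ?thesis by blast
qed

section \<open>A rational chart for degenerate configurations\<close>

lemma finite_coord_index [simp]: "finite (coord_index n m)"
  by (rule finite_subset[of _ "{..<m} \<times> {..<n} \<times> {..<n}"]) (auto simp: coord_index_def)

text \<open>The n x J matrix Q with identity rows on J and rows G w elsewhere; Y = Q Y_J expresses
  all rows of Y through the rows J.\<close>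

definition row_coeffs :: "nat set \<Rightarrow> (nat \<Rightarrow> nat \<Rightarrow> real) \<Rightarrow> nat \<Rightarrow> nat \<Rightarrow> real" where
  "row_coeffs J G w j = (if w \<in> J then (if w = j then 1 else 0) else G w j)"

datatype chart_var = Entry nat nat nat | Coeff nat nat | Block nat nat | Mult nat

text \<open>A degenerate configuration with multipliers supported on I, normalised at i0, rows of Y
  spanned by the rows J, and X a a \<noteq> 0 for X = Y Y^T, is parametrised rationally by the
  chart variables: the free entries of the A_i, the coefficients G, the block Z of X on J
  (so that X = Q Z Q^T with Q = row_coeffs J G), and the multipliers other than those of
  i0 and i1. The entries A_i(a,a), i \<in> I - {i0}, are solved from the constraints, dividing by
  X a a; the entries of A_i0 in rows or columns J from the stationarity equations; and the
  multiplier of i1 from the relation \<Sum> \<mu>_i b_i = 0. The map chart_coord injects the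
  variables into the coordinates other than (i1, a, a).\<close>

locale degeneracy_chart =
  fixes n m :: nat and b :: "nat \<Rightarrow> real" and I J :: "nat set" and i0 i1 a :: nat
  assumes I: "I \<subseteq> {..<m}" and i0: "i0 \<in> I" and i1: "i1 \<in> I" and i0_i1: "i0 \<noteq> i1"
    and b_i1: "b i1 \<noteq> 0" and J: "J \<subseteq> {..<n}" and a: "a < n"
begin

definition chart_vars :: "chart_var set" where
  "chart_vars =
     (\<lambda>(i, u, v). Entry i u v) ` {(i, u, v) \<in> coord_index n m.
        (i \<in> I \<and> i \<noteq> i0 \<longrightarrow> (u, v) \<noteq> (a, a)) \<and> (i = i0 \<longrightarrow> u \<notin> J \<and> v \<notin> J)}
   \<union> (\<lambda>(w, j). Coeff w j) ` (({..<n} - J) \<times> J)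
   \<union> (\<lambda>(j, j'). Block j j') ` {(j, j') \<in> J \<times> J. j \<le> j'}
   \<union> Mult ` (I - {i0, i1})"

fun chart_coord :: "chart_var \<Rightarrow> nat \<times> nat \<times> nat" where
  "chart_coord (Entry i u v) = (i, u, v)"
| "chart_coord (Coeff w j) = (i0, min w j, max w j)"
| "chart_coord (Block j j') = (i0, j, j')"
| "chart_coord (Mult i) = (i, a, a)"

definition coeffs :: "(chart_var \<Rightarrow> real) \<Rightarrow> nat \<Rightarrow> nat \<Rightarrow> real" where
  "coeffs x = row_coeffs J (\<lambda>w j. x (Coeff w j))"

definition gram_at :: "(chart_var \<Rightarrow> real) \<Rightarrow> nat \<Rightarrow> nat \<Rightarrow> real" where
  "gram_at x u v =
     (\<Sum>j\<in>J. \<Sum>j'\<in>J. coeffs x u j * x (Block (min j j') (max j j')) * coeffs x v j')"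

definition pivot :: "(chart_var \<Rightarrow> real) \<Rightarrow> real" where
  "pivot x = gram_at x a a"

definition mult_at :: "(chart_var \<Rightarrow> real) \<Rightarrow> nat \<Rightarrow> real" where
  "mult_at x i =
     (if i = i0 then 1
      else if i = i1 then (- b i0 - (\<Sum>i'\<in>I - {i0, i1}. x (Mult i') * b i')) / b i1
      else x (Mult i))"

definition free_entry :: "(chart_var \<Rightarrow> real) \<Rightarrow> nat \<Rightarrow> nat \<Rightarrow> nat \<Rightarrow> real" where
  "free_entry x i u v = (if i \<in> I \<and> u = a \<and> v = a then 0 else x (Entry i u v))"

definition entry_at :: "(chart_var \<Rightarrow> real) \<Rightarrow> nat \<Rightarrow> nat \<Rightarrow> nat \<Rightarrow> real" where
  "entry_at x i u v =
     (if i \<in> I \<and> u = a \<and> v = a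
      then (b i - frob_inner n (\<lambda>u' v'. free_entry x i (min u' v') (max u' v')) (gram_at x)) / pivot x
      else x (Entry i u v))"

definition mat_at :: "(chart_var \<Rightarrow> real) \<Rightarrow> nat \<Rightarrow> nat \<Rightarrow> nat \<Rightarrow> real" where
  "mat_at x i u w = entry_at x i (min u w) (max u w)"

definition i0_times_coeffs :: "(chart_var \<Rightarrow> real) \<Rightarrow> nat \<Rightarrow> nat \<Rightarrow> real" where
  "i0_times_coeffs x u j = - (\<Sum>i\<in>I - {i0}. mult_at x i * (\<Sum>w<n. mat_at x i u w * coeffs x w j))"

definition i0_entry_out :: "(chart_var \<Rightarrow> real) \<Rightarrow> nat \<Rightarrow> nat \<Rightarrow> real" where
  "i0_entry_out x w j =
     i0_times_coeffs x w j - (\<Sum>w'\<in>{..<n} - J. x (Entry i0 (min w w') (max w w')) * x (Coeff w' j))"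

definition i0_entry_in :: "(chart_var \<Rightarrow> real) \<Rightarrow> nat \<Rightarrow> nat \<Rightarrow> real" where
  "i0_entry_in x j j' = i0_times_coeffs x j j' - (\<Sum>w\<in>{..<n} - J. i0_entry_out x w j * x (Coeff w j'))"

definition chart_map :: "(chart_var \<Rightarrow> real) \<Rightarrow> nat \<times> nat \<times> nat \<Rightarrow> real" where
  "chart_map x t = (case t of (i, u, v) \<Rightarrow>
     if i \<noteq> i0 then entry_at x i u v
     else if u \<notin> J \<and> v \<notin> J then x (Entry i0 u v)
     else if u \<in> J \<and> v \<in> J then i0_entry_in x u v
     else if u \<in> J then i0_entry_out x v u
     else i0_entry_out x u v)"

lemma finite_J: "finite J"
  using J finite_subset by blast

lemma finite_I: "finite I"
  using I finite_subset by blast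

lemma finite_chart_vars: "finite chart_vars"
  unfolding chart_vars_def using finite_J finite_I
  by (intro finite_UnI finite_imageI)
     (auto intro: finite_subset[OF _ finite_coord_index] finite_subset[of _ "J \<times> J"])

lemma card_chart_vars_less: "card chart_vars < card (coord_index n m)"
proof -
  have "inj_on chart_coord chart_vars"
    using i0_i1 by (intro inj_onI) (auto simp: chart_vars_def min_def max_def split: if_splits)
  then have "card chart_vars = card (chart_coord ` chart_vars)" by (simp add: card_image)
  also have "\<dots> \<le> card (coord_index n m - {(i1, a, a)})"
  proof (rule card_mono)
    show "chart_coord ` chart_vars \<subseteq> coord_index n m - {(i1, a, a)}"
      using I J a i0 i1 i0_i1 by (auto simp: chart_vars_def coord_index_def min_def max_def)
  qed simp
  also have "\<dots> < card (coord_index n m)"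
  proof (rule psubset_card_mono)
    show "coord_index n m - {(i1, a, a)} \<subset> coord_index n m"
      using I i1 a by (auto simp: coord_index_def)
  qed simp
  finally show ?thesis .
qed

lemma Entry_in_chart_vars:
  "(i, u, v) \<in> coord_index n m \<Longrightarrow> (i \<in> I \<and> i \<noteq> i0 \<longrightarrow> (u, v) \<noteq> (a, a))
    \<Longrightarrow> (i = i0 \<longrightarrow> u \<notin> J \<and> v \<notin> J) \<Longrightarrow> Entry i u v \<in> chart_vars"
  unfolding chart_vars_def by (intro UnI1) (auto simp: image_iff)

lemma Coeff_in_chart_vars: "w < n \<Longrightarrow> w \<notin> J \<Longrightarrow> j \<in> J \<Longrightarrow> Coeff w j \<in> chart_vars"
  unfolding chart_vars_def by (intro UnI1 UnI2) (auto simp: image_iff)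

lemma Block_in_chart_vars: "j \<in> J \<Longrightarrow> j' \<in> J \<Longrightarrow> j \<le> j' \<Longrightarrow> Block j j' \<in> chart_vars"
  unfolding chart_vars_def by (intro UnI1 UnI2) (auto simp: image_iff)

lemma Mult_in_chart_vars: "i \<in> I \<Longrightarrow> i \<noteq> i0 \<Longrightarrow> i \<noteq> i1 \<Longrightarrow> Mult i \<in> chart_vars"
  unfolding chart_vars_def by (intro UnI2) (auto simp: image_iff)

lemmas poly_fun_chart_var = poly_fun_var[OF finite_chart_vars]
lemmas poly_fun_chart_const = poly_fun_const[OF finite_chart_vars]
lemmas poly_fun_chart_diff = poly_fun_diff[OF finite_chart_vars]
lemmas poly_fun_chart_mult = poly_fun_mult[OF finite_chart_vars]
lemmas poly_fun_chart_sum = poly_fun_sum[OF finite_chart_vars]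

lemma poly_fun_coeffs: "w < n \<Longrightarrow> j \<in> J \<Longrightarrow> poly_fun chart_vars (\<lambda>x. coeffs x w j)"
  unfolding coeffs_def row_coeffs_def
  by (intro poly_fun_if poly_fun_chart_const poly_fun_chart_var Coeff_in_chart_vars) auto

lemma poly_fun_gram_at: "u < n \<Longrightarrow> v < n \<Longrightarrow> poly_fun chart_vars (\<lambda>x. gram_at x u v)"
  unfolding gram_at_def using finite_J
  by (intro poly_fun_chart_sum poly_fun_chart_mult poly_fun_coeffs poly_fun_chart_var Block_in_chart_vars)
     (auto simp: min_def max_def)

lemma poly_fun_pivot: "poly_fun chart_vars pivot"
  unfolding pivot_def using poly_fun_gram_at[OF a a] by simp

lemma poly_fun_mult_at:
  assumes "i \<in> I" "i \<noteq> i0"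
  shows "poly_fun chart_vars (\<lambda>x. mult_at x i)"
proof -
  have "poly_fun chart_vars (\<lambda>x. (1 / b i1) * (- b i0 - (\<Sum>i'\<in>I - {i0, i1}. x (Mult i') * b i')))"
    using finite_I
    by (intro poly_fun_chart_mult poly_fun_chart_diff poly_fun_chart_sum poly_fun_chart_const
        poly_fun_chart_var Mult_in_chart_vars) auto
  then show ?thesis unfolding mult_at_def using assms
    by (intro poly_fun_if poly_fun_chart_const poly_fun_chart_var Mult_in_chart_vars) auto
qed

lemma poly_fun_free_part:
  assumes "i < m" "i \<noteq> i0"
  shows "poly_fun chart_vars (\<lambda>x. frob_inner n (\<lambda>u' v'. free_entry x i (min u' v') (max u' v')) (gram_at x))"
  unfolding frob_inner_def free_entry_def using assms
  by (intro poly_fun_chart_sum poly_fun_chart_mult poly_fun_gram_at poly_fun_if poly_fun_chart_const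
      poly_fun_chart_var Entry_in_chart_vars) (auto simp: coord_index_def min_def max_def)

lemmas rat_fun_chart_poly = rat_fun_over_poly[OF finite_chart_vars poly_fun_pivot]
lemmas rat_fun_chart_diff = rat_fun_over_diff[OF finite_chart_vars poly_fun_pivot]
lemmas rat_fun_chart_sum = rat_fun_over_sum[OF finite_chart_vars poly_fun_pivot]
lemmas rat_fun_chart_poly_mult = rat_fun_over_poly_mult[OF finite_chart_vars poly_fun_pivot]

lemma rat_fun_entry_at:
  assumes "i < m" "i \<noteq> i0" "u \<le> v" "v < n"
  shows "rat_fun_over chart_vars pivot (\<lambda>x. entry_at x i u v)"
  unfolding entry_at_def using assms
  by (intro rat_fun_over_if rat_fun_over_divide[OF finite_chart_vars poly_fun_pivot]
      poly_fun_chart_diff poly_fun_chart_const poly_fun_free_part rat_fun_chart_poly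
      poly_fun_chart_var Entry_in_chart_vars) (auto simp: coord_index_def)

lemma rat_fun_i0_times_coeffs:
  assumes "u < n" "j \<in> J"
  shows "rat_fun_over chart_vars pivot (\<lambda>x. i0_times_coeffs x u j)"
proof -
  have "rat_fun_over chart_vars pivot (\<lambda>x. mult_at x i * (\<Sum>w<n. coeffs x w j * mat_at x i u w))"
    if "i \<in> I - {i0}" for i
    unfolding mat_at_def using that assms I
    by (intro rat_fun_chart_poly_mult rat_fun_chart_sum poly_fun_mult_at poly_fun_coeffs rat_fun_entry_at)
       auto
  then have "rat_fun_over chart_vars pivot
      (\<lambda>x. 0 - (\<Sum>i\<in>I - {i0}. mult_at x i * (\<Sum>w<n. coeffs x w j * mat_at x i u w)))"
    using finite_I
    by (intro rat_fun_chart_diff rat_fun_chart_sum rat_fun_chart_poly[OF poly_fun_chart_const]) auto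
  then show ?thesis unfolding i0_times_coeffs_def by (simp add: mult.commute)
qed

lemma rat_fun_i0_entry_out:
  assumes "w < n" "w \<notin> J" "j \<in> J"
  shows "rat_fun_over chart_vars pivot (\<lambda>x. i0_entry_out x w j)"
  unfolding i0_entry_out_def using assms i0 I
  by (intro rat_fun_chart_diff rat_fun_i0_times_coeffs rat_fun_chart_poly poly_fun_chart_sum
      poly_fun_chart_mult poly_fun_chart_var Entry_in_chart_vars Coeff_in_chart_vars)
     (auto simp: coord_index_def min_def max_def)

lemma rat_fun_i0_entry_in:
  assumes "j \<in> J" "j' \<in> J"
  shows "rat_fun_over chart_vars pivot (\<lambda>x. i0_entry_in x j j')"
proof -
  have "rat_fun_over chart_vars pivot (\<lambda>x. x (Coeff w j') * i0_entry_out x w j)" if "w \<in> {..<n} - J" for w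
    using that assms by (intro rat_fun_chart_poly_mult poly_fun_chart_var Coeff_in_chart_vars rat_fun_i0_entry_out) auto
  then show ?thesis
    unfolding i0_entry_in_def using assms J
    by (intro rat_fun_chart_diff rat_fun_i0_times_coeffs rat_fun_chart_sum) (auto simp: mult.commute)
qed

lemma rat_fun_chart_map:
  assumes "t \<in> coord_index n m"
  shows "rat_fun_over chart_vars pivot (\<lambda>x. chart_map x t)"
proof -
  obtain i u v where t: "t = (i, u, v)" and "i < m" "u \<le> v" "v < n"
    using assms unfolding coord_index_def by auto
  then show ?thesis unfolding chart_map_def t prod.case using i0 I
    by (intro rat_fun_over_if rat_fun_entry_at rat_fun_chart_poly poly_fun_chart_var Entry_in_chart_vars
        rat_fun_i0_entry_in rat_fun_i0_entry_out) (auto simp: coord_index_def)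
qed

end

lemma frob_inner_split_entry:
  assumes "a < n"
  shows "frob_inner n A X = frob_inner n (\<lambda>u v. if u = a \<and> v = a then 0 else A u v) X + A a a * X a a"
proof -
  have "frob_inner n A X = frob_inner n (\<lambda>u v. if u = a \<and> v = a then 0 else A u v) X
      + (\<Sum>u<n. \<Sum>v<n. if u = a \<and> v = a then A a a * X a a else 0)"
    unfolding frob_inner_def sum.distrib[symmetric] by (intro sum.cong refl) auto
  also have "(\<Sum>u<n. \<Sum>v<n. if u = a \<and> v = a then A a a * X a a else 0)
      = (\<Sum>u<n. if u = a then A a a * X a a else 0)"
    using assms by (intro sum.cong refl) (cases "u = a", simp_all)
  finally show ?thesis using assms by simp
qed

lemma sum_row_coeffs_split:
  assumes "J \<subseteq> {..<n}" "j \<in> J"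
  shows "(\<Sum>w<n. B w * row_coeffs J G w j) = B j + (\<Sum>w\<in>{..<n} - J. B w * G w j)"
proof -
  have "finite J" using assms(1) finite_subset by blast
  have "(\<Sum>w<n. B w * row_coeffs J G w j)
      = (\<Sum>w\<in>J. B w * row_coeffs J G w j) + (\<Sum>w\<in>{..<n} - J. B w * row_coeffs J G w j)"
    using sum.subset_diff[OF assms(1) finite_lessThan] by (simp add: add.commute)
  also have "(\<Sum>w\<in>J. B w * row_coeffs J G w j) = (\<Sum>w\<in>J. if w = j then B w else 0)"
    by (intro sum.cong refl) (simp add: row_coeffs_def)
  also have "\<dots> = B j"
    using assms(2) \<open>finite J\<close> by simp
  also have "(\<Sum>w\<in>{..<n} - J. B w * row_coeffs J G w j) = (\<Sum>w\<in>{..<n} - J. B w * G w j)"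
    by (intro sum.cong refl) (simp add: row_coeffs_def)
  finally show ?thesis .
qed

text \<open>Stationarity (\<Sum> \<mu>_i A_i) Y = 0 appears in the equivalent reduced form (\<Sum> \<mu>_i A_i) Q = 0.\<close>

definition degenerate :: "nat \<Rightarrow> (nat \<Rightarrow> real) \<Rightarrow> nat set \<Rightarrow> nat set \<Rightarrow> nat \<Rightarrow> nat
    \<Rightarrow> (nat \<times> nat \<times> nat \<Rightarrow> real) \<Rightarrow> bool" where
  "degenerate n b I J i0 a c \<longleftrightarrow>
     (\<exists>(p::nat) Y G \<mu>. \<mu> i0 = 1 \<and> (\<Sum>i\<in>I. \<mu> i * b i) = 0 \<and> gram p Y a a \<noteq> 0
        \<and> (\<forall>i\<in>I. frob_inner n (sym_mats_of c i) (gram p Y) = b i)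
        \<and> (\<forall>w<n. \<forall>l<p. Y w l = (\<Sum>j\<in>J. row_coeffs J G w j * Y j l))
        \<and> (\<forall>u<n. \<forall>j\<in>J. (\<Sum>i\<in>I. \<mu> i * (\<Sum>w<n. sym_mats_of c i u w * row_coeffs J G w j)) = 0))"

locale degenerate_point = degeneracy_chart +
  fixes c :: "nat \<times> nat \<times> nat \<Rightarrow> real" and p :: nat and Y G :: "nat \<Rightarrow> nat \<Rightarrow> real"
    and \<mu> :: "nat \<Rightarrow> real"
  assumes \<mu>_i0: "\<mu> i0 = 1" and \<mu>_b: "(\<Sum>i\<in>I. \<mu> i * b i) = 0" and gram_a: "gram p Y a a \<noteq> 0"
    and active: "\<And>i. i \<in> I \<Longrightarrow> frob_inner n (sym_mats_of c i) (gram p Y) = b i"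
    and rows: "\<And>w l. w < n \<Longrightarrow> l < p \<Longrightarrow> Y w l = (\<Sum>j\<in>J. row_coeffs J G w j * Y j l)"
    and stationary: "\<And>u j. u < n \<Longrightarrow> j \<in> J
      \<Longrightarrow> (\<Sum>i\<in>I. \<mu> i * (\<Sum>w<n. sym_mats_of c i u w * row_coeffs J G w j)) = 0"
begin

definition params :: "chart_var \<Rightarrow> real" where
  "params k = (case k of Entry i u v \<Rightarrow> c (i, u, v) | Coeff w j \<Rightarrow> G w j
     | Block j j' \<Rightarrow> gram p Y j j' | Mult i \<Rightarrow> \<mu> i)"

lemma coeffs_params: "coeffs params = row_coeffs J G"
  by (simp add: coeffs_def params_def)

lemma gram_at_params:
  assumes "u < n" "v < n"
  shows "gram_at params u v = gram p Y u v"
proof -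
  let ?Q = "row_coeffs J G"
  have block: "params (Block (min j j') (max j j')) = gram p Y j j'" for j j'
    by (simp add: params_def gram_def min_def max_def mult.commute)
  have "gram p Y u v = (\<Sum>l<p. (\<Sum>j\<in>J. ?Q u j * Y j l) * (\<Sum>j'\<in>J. ?Q v j' * Y j' l))"
    unfolding gram_def using rows assms by simp
  also have "\<dots> = (\<Sum>l<p. \<Sum>j\<in>J. \<Sum>j'\<in>J. ?Q u j * ?Q v j' * (Y j l * Y j' l))"
    by (simp add: sum_product mult_ac)
  also have "\<dots> = (\<Sum>j\<in>J. \<Sum>j'\<in>J. \<Sum>l<p. ?Q u j * ?Q v j' * (Y j l * Y j' l))"
    by (subst sum.swap) (simp add: sum.swap[of _ "{..<p}"])
  also have "\<dots> = gram_at params u v"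
    unfolding gram_at_def coeffs_params block gram_def by (simp add: sum_distrib_left mult_ac)
  finally show ?thesis by simp
qed

lemma pivot_params: "pivot params \<noteq> 0"
  using gram_at_params[OF a a] gram_a by (simp add: pivot_def)

lemma mult_at_params:
  assumes "i \<in> I"
  shows "mult_at params i = \<mu> i"
proof -
  have "(\<Sum>i\<in>I. \<mu> i * b i) = \<mu> i0 * b i0 + (\<Sum>i\<in>I - {i0}. \<mu> i * b i)"
    using finite_I i0 by (rule sum.remove)
  also have "(\<Sum>i\<in>I - {i0}. \<mu> i * b i) = \<mu> i1 * b i1 + (\<Sum>i\<in>I - {i0} - {i1}. \<mu> i * b i)"
    using finite_I i1 i0_i1 by (intro sum.remove) auto
  finally have "(\<Sum>i\<in>I. \<mu> i * b i) = \<mu> i0 * b i0 + \<mu> i1 * b i1 + (\<Sum>i\<in>I - {i0, i1}. \<mu> i * b i)"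
    by (simp add: Diff_insert2[symmetric])
  then have "\<mu> i1 = (- b i0 - (\<Sum>i\<in>I - {i0, i1}. \<mu> i * b i)) / b i1"
    using \<mu>_b \<mu>_i0 b_i1 by (simp add: field_simps)
  then show ?thesis using \<mu>_i0 i0_i1 by (simp add: mult_at_def params_def)
qed

lemma entry_at_params:
  assumes "i < m" "i \<noteq> i0" "u \<le> v" "v < n"
  shows "entry_at params i u v = c (i, u, v)"
proof (cases "i \<in> I \<and> u = a \<and> v = a")
  case True
  have free: "(\<lambda>u' v'. free_entry params i (min u' v') (max u' v'))
      = (\<lambda>u' v'. if u' = a \<and> v' = a then 0 else sym_mats_of c i u' v')"
    using True by (auto simp: fun_eq_iff free_entry_def params_def sym_mats_of_def min_def max_def)
  have "b i = frob_inner n (sym_mats_of c i) (gram_at params)"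
    using active[of i] True unfolding frob_inner_def by (simp add: gram_at_params)
  also have "\<dots> = frob_inner n (\<lambda>u' v'. free_entry params i (min u' v') (max u' v')) (gram_at params)
      + c (i, a, a) * pivot params"
    unfolding frob_inner_split_entry[OF a, of "sym_mats_of c i"] free
    by (simp add: pivot_def sym_mats_of_def)
  finally show ?thesis using True pivot_params by (simp add: entry_at_def field_simps)
next
  case False
  then show ?thesis by (auto simp: entry_at_def params_def)
qed

lemma mat_at_params:
  assumes "i \<in> I" "i \<noteq> i0" "u < n" "w < n"
  shows "mat_at params i u w = sym_mats_of c i u w"
  unfolding mat_at_def sym_mats_of_def using assms I by (intro entry_at_params) auto

lemma i0_times_coeffs_params:
  assumes "u < n" "j \<in> J"
  shows "i0_times_coeffs params u j = (\<Sum>w<n. sym_mats_of c i0 u w * row_coeffs J G w j)"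
proof -
  have "(\<Sum>i\<in>I. \<mu> i * (\<Sum>w<n. sym_mats_of c i u w * row_coeffs J G w j))
      = (\<Sum>w<n. sym_mats_of c i0 u w * row_coeffs J G w j)
        + (\<Sum>i\<in>I - {i0}. \<mu> i * (\<Sum>w<n. sym_mats_of c i u w * row_coeffs J G w j))"
    using finite_I i0 \<mu>_i0 by (simp add: sum.remove)
  moreover have "i0_times_coeffs params u j
      = - (\<Sum>i\<in>I - {i0}. \<mu> i * (\<Sum>w<n. sym_mats_of c i u w * row_coeffs J G w j))"
    unfolding i0_times_coeffs_def coeffs_params using assms
    by (intro arg_cong[where f = uminus] sum.cong refl) (auto simp: mult_at_params mat_at_params)
  ultimately show ?thesis using stationary[OF assms] by simp
qed

lemma i0_entry_out_params:
  assumes "w < n" "w \<notin> J" "j \<in> J"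
  shows "i0_entry_out params w j = sym_mats_of c i0 w j"
  using i0_times_coeffs_params[OF assms(1,3)] sum_row_coeffs_split[OF J assms(3)]
  by (simp add: i0_entry_out_def params_def sym_mats_of_def)

lemma i0_entry_in_params:
  assumes "j \<in> J" "j' \<in> J"
  shows "i0_entry_in params j j' = sym_mats_of c i0 j j'"
proof -
  have "(\<Sum>w\<in>{..<n} - J. i0_entry_out params w j * params (Coeff w j'))
      = (\<Sum>w\<in>{..<n} - J. sym_mats_of c i0 j w * G w j')"
    using assms by (intro sum.cong refl)
      (auto simp: i0_entry_out_params params_def sym_mats_of_def min.commute max.commute)
  then show ?thesis
    using i0_times_coeffs_params[of j j'] sum_row_coeffs_split[OF J assms(2)] assms J
    by (auto simp: i0_entry_in_def)
qed

lemma chart_map_params: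
  assumes "t \<in> coord_index n m"
  shows "chart_map params t = c t"
proof -
  obtain i u v where t: "t = (i, u, v)" and "i < m" "u \<le> v" "v < n"
    using assms unfolding coord_index_def by auto
  moreover have "sym_mats_of c i0 u v = c (i0, u, v)" "sym_mats_of c i0 v u = c (i0, u, v)"
    using \<open>u \<le> v\<close> by (simp_all add: sym_mats_of_def min_def max_def)
  ultimately show ?thesis
    using J by (auto simp: chart_map_def entry_at_params i0_entry_in_params i0_entry_out_params params_def)
qed

end

context degeneracy_chart
begin

lemma degenerate_null:
  "\<exists>N\<in>null_sets (sym_lebesgue n m). \<forall>c\<in>space (sym_lebesgue n m). degenerate n b I J i0 a c \<longrightarrow> c \<in> N"
proof -
  have "\<exists>N\<in>null_sets (PiM (coord_index n m) (\<lambda>_. lborel)). \<forall>c\<in>space (PiM (coord_index n m) (\<lambda>_. lborel)).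
      (\<exists>x. pivot x \<noteq> 0 \<and> (\<forall>t\<in>coord_index n m. c t = chart_map x t)) \<longrightarrow> c \<in> N"
    by (rule rat_map_image_null[OF finite_chart_vars finite_coord_index card_chart_vars_less poly_fun_pivot])
      (rule rat_fun_chart_map)
  then obtain N where "N \<in> null_sets (sym_lebesgue n m)"
    and N: "\<And>c. c \<in> space (sym_lebesgue n m) \<Longrightarrow> \<exists>x. pivot x \<noteq> 0 \<and> (\<forall>t\<in>coord_index n m. c t = chart_map x t)
      \<Longrightarrow> c \<in> N"
    unfolding sym_lebesgue_def by blast
  moreover have "c \<in> N" if c: "c \<in> space (sym_lebesgue n m)" and "degenerate n b I J i0 a c" for c
  proof -
    obtain p Y G \<mu> where "\<mu> i0 = 1" "(\<Sum>i\<in>I. \<mu> i * b i) = 0" "gram p Y a a \<noteq> 0"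
      "\<forall>i\<in>I. frob_inner n (sym_mats_of c i) (gram p Y) = b i"
      "\<forall>w<n. \<forall>l<p. Y w l = (\<Sum>j\<in>J. row_coeffs J G w j * Y j l)"
      "\<forall>u<n. \<forall>j\<in>J. (\<Sum>i\<in>I. \<mu> i * (\<Sum>w<n. sym_mats_of c i u w * row_coeffs J G w j)) = 0"
      using \<open>degenerate n b I J i0 a c\<close> unfolding degenerate_def by blast
    then interpret degenerate_point n m b I J i0 i1 a c p Y G \<mu>
      by unfold_locales auto
    show ?thesis
      by (intro N[OF c] exI[of _ params]) (simp add: pivot_params chart_map_params)
  qed
  ultimately show ?thesis by blast
qed

end

section \<open>Failure of LICQ gives a degenerate configuration\<close>

definition rows_independent :: "nat \<Rightarrow> (nat \<Rightarrow> nat \<Rightarrow> real) \<Rightarrow> nat set \<Rightarrow> bool" where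
  "rows_independent p Y J \<longleftrightarrow> (\<forall>g. (\<forall>l<p. (\<Sum>j\<in>J. g j * Y j l) = 0) \<longrightarrow> (\<forall>j\<in>J. g j = 0))"

lemma row_in_span_if_dependent:
  assumes "finite J" "w \<notin> J" "rows_independent p Y J" "\<not> rows_independent p Y (insert w J)"
  shows "\<exists>g. \<forall>l<p. Y w l = (\<Sum>j\<in>J. g j * Y j l)"
proof -
  obtain g where g0: "\<forall>l<p. (\<Sum>j\<in>insert w J. g j * Y j l) = 0" and nz: "\<exists>j\<in>insert w J. g j \<noteq> 0"
    using assms(4) unfolding rows_independent_def by blast
  have g: "g w * Y w l + (\<Sum>j\<in>J. g j * Y j l) = 0" if "l < p" for l
    using g0 that assms(1,2) by simp
  have "g w \<noteq> 0"
  proof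
    assume "g w = 0"
    then have "\<forall>l<p. (\<Sum>j\<in>J. g j * Y j l) = 0" using g by simp
    then have "\<forall>j\<in>J. g j = 0" using assms(3) unfolding rows_independent_def by blast
    then show False using nz \<open>g w = 0\<close> by auto
  qed
  have "Y w l = (\<Sum>j\<in>J. (- g j / g w) * Y j l)" if "l < p" for l
  proof -
    have "g w * Y w l = - (\<Sum>j\<in>J. g j * Y j l)"
      using g[OF that] by (simp add: eq_neg_iff_add_eq_0)
    then have "Y w l = - (\<Sum>j\<in>J. g j * Y j l) / g w"
      using \<open>g w \<noteq> 0\<close> by (simp add: field_simps)
    also have "\<dots> = (\<Sum>j\<in>J. (- g j / g w) * Y j l)"
      by (simp add: sum_divide_distrib sum_negf)
    finally show ?thesis .
  qed
  then show ?thesis by (intro exI[of _ "\<lambda>j. - g j / g w"]) blast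
qed

lemma exists_row_basis:
  "\<exists>J G. J \<subseteq> {..<n} \<and> rows_independent p Y J \<and>
     (\<forall>w<n. \<forall>l<p. Y w l = (\<Sum>j\<in>J. row_coeffs J G w j * Y j l))"
proof -
  define S where "S = {J. J \<subseteq> {..<n} \<and> rows_independent p Y J}"
  have "finite S" unfolding S_def by (rule finite_subset[of _ "Pow {..<n}"]) auto
  moreover have "{} \<in> S" by (simp add: S_def rows_independent_def)
  ultimately obtain J where "J \<in> S" and max: "\<forall>J'\<in>S. J \<subseteq> J' \<longrightarrow> J = J'"
    using finite_has_maximal[of S] by blast
  then have J: "J \<subseteq> {..<n}" "rows_independent p Y J"
    and maximal: "\<And>J'. J' \<subseteq> {..<n} \<Longrightarrow> rows_independent p Y J' \<Longrightarrow> J \<subseteq> J' \<Longrightarrow> J = J'"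
    unfolding S_def by auto
  have "finite J" using J(1) finite_subset by blast
  have "\<forall>w\<in>{..<n} - J. \<exists>g. \<forall>l<p. Y w l = (\<Sum>j\<in>J. g j * Y j l)"
  proof
    fix w assume w: "w \<in> {..<n} - J"
    then have "\<not> rows_independent p Y (insert w J)"
      using maximal[of "insert w J"] J(1) by auto
    then show "\<exists>g. \<forall>l<p. Y w l = (\<Sum>j\<in>J. g j * Y j l)"
      using w \<open>finite J\<close> J(2) by (intro row_in_span_if_dependent) auto
  qed
  from bchoice[OF this] obtain G where G: "\<forall>w\<in>{..<n} - J. \<forall>l<p. Y w l = (\<Sum>j\<in>J. G w j * Y j l)"
    by blast
  have "Y w l = (\<Sum>j\<in>J. row_coeffs J G w j * Y j l)" if "w < n" "l < p" for w l
  proof (cases "w \<in> J")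
    case True
    have "(\<Sum>j\<in>J. row_coeffs J G w j * Y j l) = (\<Sum>j\<in>J. if w = j then Y j l else 0)"
      using True by (intro sum.cong refl) (simp add: row_coeffs_def)
    then show ?thesis using True \<open>finite J\<close> by simp
  next
    case False
    then show ?thesis using G that by (simp add: row_coeffs_def)
  qed
  then show ?thesis using J by blast
qed

lemma not_LICQ_imp_multipliers:
  assumes "\<not> LICQ n p m A b Y"
  shows "\<exists>I i0 \<mu>. I \<subseteq> active_set n p m A b Y \<and> i0 \<in> I \<and> \<mu> i0 = 1 \<and>
           (\<forall>u<n. \<forall>l<p. (\<Sum>i\<in>I. \<mu> i * (\<Sum>k<n. A i u k * Y k l)) = 0)"
proof -
  let ?act = "active_set n p m A b Y"
  obtain \<mu> i0 where grad: "\<forall>u<n. \<forall>l<p. (\<Sum>i\<in>?act. \<mu> i * constr_grad n A i Y u l) = 0"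
    and i0: "i0 \<in> ?act" "\<mu> i0 \<noteq> 0"
    using assms unfolding LICQ_def by blast
  define \<nu> where "\<nu> i = \<mu> i / \<mu> i0" for i
  have "(\<Sum>i\<in>?act. \<nu> i * (\<Sum>k<n. A i u k * Y k l))
      = (\<Sum>i\<in>?act. \<mu> i * constr_grad n A i Y u l) / (2 * \<mu> i0)" for u l
    unfolding \<nu>_def constr_grad_def sum_divide_distrib by (intro sum.cong refl) simp
  then show ?thesis
    using grad i0 by (intro exI[of _ ?act] exI[of _ i0] exI[of _ \<nu>]) (simp add: \<nu>_def)
qed

lemma sum_rotate3: "(\<Sum>i\<in>A. \<Sum>j\<in>B. \<Sum>k\<in>C. f i j k) = (\<Sum>k\<in>C. \<Sum>i\<in>A. \<Sum>j\<in>B. f i j k)"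
  by (subst sum.swap) (simp add: sum.swap[of _ C])

lemma sum_multipliers_b_eq_0:
  assumes active: "\<And>i. i \<in> I \<Longrightarrow> frob_inner n (A i) (gram p Y) = b i"
    and stationary: "\<And>u l. u < n \<Longrightarrow> l < p \<Longrightarrow> (\<Sum>i\<in>I. \<mu> i * (\<Sum>k<n. A i u k * Y k l)) = 0"
  shows "(\<Sum>i\<in>I. \<mu> i * b i) = 0"
proof -
  have "(\<Sum>i\<in>I. \<mu> i * b i) = (\<Sum>i\<in>I. \<mu> i * frob_inner n (A i) (gram p Y))"
    using active by simp
  also have "\<dots> = (\<Sum>i\<in>I. \<Sum>u<n. \<Sum>v<n. \<Sum>l<p. \<mu> i * A i u v * (Y u l * Y v l))"
    unfolding frob_inner_def gram_def by (simp add: sum_distrib_left mult_ac)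
  also have "\<dots> = (\<Sum>u<n. \<Sum>i\<in>I. \<Sum>v<n. \<Sum>l<p. \<mu> i * A i u v * (Y u l * Y v l))"
    by (rule sum.swap)
  also have "\<dots> = (\<Sum>u<n. \<Sum>l<p. \<Sum>i\<in>I. \<Sum>v<n. \<mu> i * A i u v * (Y u l * Y v l))"
    by (intro sum.cong refl sum_rotate3)
  also have "\<dots> = (\<Sum>u<n. \<Sum>l<p. Y u l * (\<Sum>i\<in>I. \<mu> i * (\<Sum>v<n. A i u v * Y v l)))"
    by (simp add: sum_distrib_left mult_ac)
  also have "\<dots> = 0" using stationary by simp
  finally show ?thesis .
qed

lemma stationary_row_coeffs:
  assumes rows: "\<And>w l. w < n \<Longrightarrow> l < p \<Longrightarrow> Y w l = (\<Sum>j\<in>J. row_coeffs J G w j * Y j l)"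
    and indep: "rows_independent p Y J"
    and stationary: "\<And>u l. u < n \<Longrightarrow> l < p \<Longrightarrow> (\<Sum>i\<in>I. \<mu> i * (\<Sum>k<n. A i u k * Y k l)) = 0"
    and "u < n" "j \<in> J"
  shows "(\<Sum>i\<in>I. \<mu> i * (\<Sum>w<n. A i u w * row_coeffs J G w j)) = 0"
proof -
  define g where "g j = (\<Sum>i\<in>I. \<mu> i * (\<Sum>w<n. A i u w * row_coeffs J G w j))" for j
  have "(\<Sum>j\<in>J. g j * Y j l) = 0" if "l < p" for l
  proof -
    have "(\<Sum>j\<in>J. g j * Y j l) = (\<Sum>j\<in>J. \<Sum>i\<in>I. \<Sum>w<n. \<mu> i * A i u w * (row_coeffs J G w j * Y j l))"
      unfolding g_def by (simp add: sum_distrib_left sum_distrib_right mult_ac)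
    also have "\<dots> = (\<Sum>i\<in>I. \<Sum>w<n. \<Sum>j\<in>J. \<mu> i * A i u w * (row_coeffs J G w j * Y j l))"
      by (rule sum_rotate3[symmetric])
    also have "\<dots> = (\<Sum>i\<in>I. \<mu> i * (\<Sum>w<n. A i u w * (\<Sum>j\<in>J. row_coeffs J G w j * Y j l)))"
      by (simp add: sum_distrib_left mult_ac)
    also have "\<dots> = (\<Sum>i\<in>I. \<mu> i * (\<Sum>w<n. A i u w * Y w l))"
      using that by (intro sum.cong refl arg_cong2[where f = "(*)"] rows[symmetric]) auto
    also have "\<dots> = 0" using stationary \<open>u < n\<close> that by simp
    finally show ?thesis .
  qed
  then have "\<forall>j\<in>J. g j = 0" using indep unfolding rows_independent_def by blast
  then show ?thesis using \<open>j \<in> J\<close> by (simp add: g_def)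
qed

lemma gram_diag_nonzero:
  assumes "frob_inner n A (gram p Y) \<noteq> 0"
  shows "\<exists>a<n. gram p Y a a \<noteq> 0"
proof (rule ccontr)
  assume "\<not> ?thesis"
  then have "(\<Sum>l<p. Y u l * Y u l) = 0" if "u < n" for u
    using that unfolding gram_def by auto
  then have "Y u l = 0" if "u < n" "l < p" for u l
    using that sum_nonneg_eq_0_iff[of "{..<p}" "\<lambda>l. Y u l * Y u l"] by simp
  then have "frob_inner n A (gram p Y) = 0"
    unfolding frob_inner_def gram_def by simp
  then show False using assms by simp
qed

definition chart_indices :: "nat \<Rightarrow> nat \<Rightarrow> (nat set \<times> nat set \<times> nat \<times> nat \<times> nat) set" where
  "chart_indices n m =
     {(I, J, i0, i1, a). I \<subseteq> {..<m} \<and> i0 \<in> I \<and> i1 \<in> I \<and> i0 \<noteq> i1 \<and> J \<subseteq> {..<n} \<and> a < n}"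

lemma finite_chart_indices: "finite (chart_indices n m)"
  by (rule finite_subset[of _ "Pow {..<m} \<times> Pow {..<n} \<times> {..<m} \<times> {..<m} \<times> {..<n}"])
     (auto simp: chart_indices_def)

lemma not_LICQ_imp_degenerate:
  assumes b: "\<forall>i<m. b i \<noteq> 0" and "\<not> LICQ n p m (sym_mats_of c) b Y"
  shows "\<exists>(I, J, i0, i1, a)\<in>chart_indices n m. degenerate n b I J i0 a c"
proof -
  obtain I i0 \<mu> where I: "I \<subseteq> active_set n p m (sym_mats_of c) b Y" and "i0 \<in> I" "\<mu> i0 = 1"
    and stationary: "\<forall>u<n. \<forall>l<p. (\<Sum>i\<in>I. \<mu> i * (\<Sum>k<n. sym_mats_of c i u k * Y k l)) = 0"
    using not_LICQ_imp_multipliers[OF assms(2)] by blast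
  have "I \<subseteq> {..<m}" using I unfolding active_set_def by auto
  have active: "\<forall>i\<in>I. frob_inner n (sym_mats_of c i) (gram p Y) = b i"
    using I unfolding active_set_def by auto
  have \<mu>_b: "(\<Sum>i\<in>I. \<mu> i * b i) = 0"
    by (rule sum_multipliers_b_eq_0) (use active stationary in blast)+
  have "b i0 \<noteq> 0" using b \<open>i0 \<in> I\<close> \<open>I \<subseteq> {..<m}\<close> by auto
  then have "I \<noteq> {i0}" using \<mu>_b \<open>\<mu> i0 = 1\<close> by force
  then obtain i1 where "i1 \<in> I" "i1 \<noteq> i0" using \<open>i0 \<in> I\<close> by blast
  have "frob_inner n (sym_mats_of c i0) (gram p Y) \<noteq> 0"
    using active \<open>i0 \<in> I\<close> \<open>b i0 \<noteq> 0\<close> by simp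
  then obtain a where "a < n" "gram p Y a a \<noteq> 0"
    using gram_diag_nonzero by blast
  obtain J G where "J \<subseteq> {..<n}" and indep: "rows_independent p Y J"
    and rows: "\<forall>w<n. \<forall>l<p. Y w l = (\<Sum>j\<in>J. row_coeffs J G w j * Y j l)"
    using exists_row_basis[of n p Y] by (elim exE conjE)
  have "\<forall>u<n. \<forall>j\<in>J. (\<Sum>i\<in>I. \<mu> i * (\<Sum>w<n. sym_mats_of c i u w * row_coeffs J G w j)) = 0"
  proof (intro allI impI ballI)
    fix u j assume "u < n" "j \<in> J"
    show "(\<Sum>i\<in>I. \<mu> i * (\<Sum>w<n. sym_mats_of c i u w * row_coeffs J G w j)) = 0"
      by (rule stationary_row_coeffs[OF _ indep _ \<open>u < n\<close> \<open>j \<in> J\<close>]) (use rows stationary in blast)+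
  qed
  then have "degenerate n b I J i0 a c"
    unfolding degenerate_def using \<open>\<mu> i0 = 1\<close> \<mu>_b \<open>gram p Y a a \<noteq> 0\<close> active rows
    by (intro exI[of _ p] exI[of _ Y] exI[of _ G] exI[of _ \<mu>] conjI)
  moreover have "(I, J, i0, i1, a) \<in> chart_indices n m"
    unfolding chart_indices_def using \<open>I \<subseteq> {..<m}\<close> \<open>i0 \<in> I\<close> \<open>i1 \<in> I\<close> \<open>i1 \<noteq> i0\<close> \<open>J \<subseteq> {..<n}\<close> \<open>a < n\<close>
    by auto
  ultimately show ?thesis by (intro bexI[of _ "(I, J, i0, i1, a)"]) simp_all
qed

lemma null_cover_finite_union:
  assumes "finite S" "\<And>s. s \<in> S \<Longrightarrow> \<exists>N\<in>null_sets M. \<forall>x\<in>space M. P s x \<longrightarrow> x \<in> N"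
  shows "\<exists>N\<in>null_sets M. \<forall>x\<in>space M. (\<exists>s\<in>S. P s x) \<longrightarrow> x \<in> N"
proof -
  have "\<forall>s\<in>S. \<exists>N. N \<in> null_sets M \<and> (\<forall>x\<in>space M. P s x \<longrightarrow> x \<in> N)"
    using assms(2) by blast
  then obtain N where "\<forall>s\<in>S. N s \<in> null_sets M \<and> (\<forall>x\<in>space M. P s x \<longrightarrow> x \<in> N s)"
    by (rule bchoice[THEN exE])
  then show ?thesis
    using assms(1) by (intro bexI[of _ "\<Union>s\<in>S. N s"] null_sets_UN') (auto intro: countable_finite)
qed

lemma degenerate_null_cover:
  assumes "\<forall>i<m. b i \<noteq> 0"
  shows "\<exists>N\<in>null_sets (sym_lebesgue n m). \<forall>c\<in>space (sym_lebesgue n m).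
           (\<exists>(I, J, i0, i1, a)\<in>chart_indices n m. degenerate n b I J i0 a c) \<longrightarrow> c \<in> N"
proof (rule null_cover_finite_union[OF finite_chart_indices])
  fix s assume "s \<in> chart_indices n m"
  obtain I J i0 i1 a where s: "s = (I, J, i0, i1, a)"
    by (rule prod_cases5)
  interpret degeneracy_chart n m b I J i0 i1 a
    using \<open>s \<in> chart_indices n m\<close> assms unfolding s chart_indices_def
    by unfold_locales auto
  show "\<exists>N\<in>null_sets (sym_lebesgue n m). \<forall>c\<in>space (sym_lebesgue n m).
      (case s of (I, J, i0, i1, a) \<Rightarrow> degenerate n b I J i0 a c) \<longrightarrow> c \<in> N"
    using degenerate_null by (simp add: s)
qed

theorem proposition6:
  fixes n p m1 m2 :: nat and b :: "nat \<Rightarrow> real"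
  assumes "\<forall>i < m1 + m2. b i \<noteq> 0"
  shows "\<exists>N \<in> null_sets (sym_lebesgue n (m1 + m2)).
           \<forall>c \<in> space (sym_lebesgue n (m1 + m2)) - N.
             \<forall>Y :: nat \<Rightarrow> nat \<Rightarrow> real.
               BM_feasible n p m1 m2 (sym_mats_of c) b Y
               \<longrightarrow> LICQ n p (m1 + m2) (sym_mats_of c) b Y"
proof -
  obtain N where "N \<in> null_sets (sym_lebesgue n (m1 + m2))"
    and N: "\<forall>c\<in>space (sym_lebesgue n (m1 + m2)).
      (\<exists>(I, J, i0, i1, a)\<in>chart_indices n (m1 + m2). degenerate n b I J i0 a c) \<longrightarrow> c \<in> N"
    using degenerate_null_cover[OF assms] by blast
  moreover have "LICQ n p (m1 + m2) (sym_mats_of c) b Y"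
    if c: "c \<in> space (sym_lebesgue n (m1 + m2)) - N" for c Y
  proof (rule ccontr)
    assume "\<not> LICQ n p (m1 + m2) (sym_mats_of c) b Y"
    then have "c \<in> N" using N c not_LICQ_imp_degenerate[OF assms] by blast
    then show False using c by blast
  qed
  ultimately show ?thesis by blast
qed

end
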